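(* Let $g\geqslant0$. With respect to the lexicographic monomial order with $\alpha>\gamma$, the set \[\{\zeta'_g,\ \gamma\zeta'_{g-2},\ \gamma^2\zeta'_{g-4},\ \ldots,\ \gamma^{\lfloor g/2\rfloor}\zeta'_{g-2\lfloor g/2\rfloor},\ \gamma^{\lceil g/2\rceil}\}\] is a Gröbner basis for $J'_g$. Consequently, a vector space basis of $\mathbb{C}[\alpha,\gamma]/J'_g$ is represented by the monomials $\alpha^a\gamma^c$ with $0\leqslant c<g/2$ and $0\leqslant a<g-2c$ when $g$ is even, and by the monomials $\alpha^a\gamma^c$ with $0\leqslant c\leqslant(g-1)/2$ and $0\leqslant a<g-2c$ when $g$ is odd.
   Context: Define $\zeta'_k\in\mathbb{C}[\alpha,\gamma]$ by $\zeta'_k=0$ for $k<0$, $\zeta'_0=1$, and $\zeta'_{k+1}=\alpha\zeta'_k+2k(k-1)\gamma\zeta'_{k-2}$ for $k\geqslant0$; let $J'_k=(\zeta'_k,\zeta'_{k+1},\zeta'_{k+2})$. *)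

theory Defs
  imports "HOL-Computational_Algebra.Polynomial"
begin

text \<open>The bivariate polynomial ring C[alpha,gamma] is represented as
  complex poly poly: the outer variable is alpha, the coefficients are
  polynomials in gamma.\<close>

type_synonym bipoly = "complex poly poly"

definition var_alpha :: bipoly where "var_alpha = [:0, 1:]"
definition var_gamma :: bipoly where "var_gamma = [:[:0, 1:]:]"

definition bmonom :: "complex \<Rightarrow> nat \<Rightarrow> nat \<Rightarrow> bipoly" where
  "bmonom u a c = monom (monom u c) a"

text \<open>zeta'_k: zeta'_0 = 1, zeta'_{k+1} = alpha zeta'_k + 2k(k-1) gamma zeta'_{k-2},
  with zeta'_k = 0 for k < 0 (the extra term vanishes for k = 0, 1 anyway).\<close>
fun zeta' :: "nat \<Rightarrow> bipoly" where
  "zeta' 0 = 1"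
| "zeta' (Suc 0) = var_alpha * zeta' 0"
| "zeta' (Suc (Suc 0)) = var_alpha * zeta' (Suc 0)"
| "zeta' (Suc (Suc (Suc n))) = var_alpha * zeta' (Suc (Suc n))
      + of_nat (2 * (n + 2) * (n + 1)) * var_gamma * zeta' n"

definition gen_ideal :: "bipoly set \<Rightarrow> bipoly set" where
  "gen_ideal S = {p. \<exists>F r. finite F \<and> F \<subseteq> S \<and> p = (\<Sum>f\<in>F. r f * f)}"

definition J' :: "nat \<Rightarrow> bipoly set" where
  "J' k = gen_ideal {zeta' k, zeta' (k + 1), zeta' (k + 2)}"

text \<open>Leading monomial (exponent of alpha, exponent of gamma) w.r.t. lex order with
  alpha > gamma: maximal alpha-degree first, then maximal gamma-degree.\<close>
definition lead_mon :: "bipoly \<Rightarrow> nat \<times> nat" where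
  "lead_mon p = (degree p, degree (lead_coeff p))"

definition mon_dvd :: "nat \<times> nat \<Rightarrow> nat \<times> nat \<Rightarrow> bool" where
  "mon_dvd m n \<longleftrightarrow> fst m \<le> fst n \<and> snd m \<le> snd n"

definition is_groebner_basis :: "bipoly set \<Rightarrow> bipoly set \<Rightarrow> bool" where
  "is_groebner_basis G I \<longleftrightarrow> finite G \<and> G \<subseteq> I \<and>
     (\<forall>f\<in>I. f \<noteq> 0 \<longrightarrow> (\<exists>g\<in>G. g \<noteq> 0 \<and> mon_dvd (lead_mon g) (lead_mon f)))"

definition monomials_quotient_basis :: "(nat \<times> nat) set \<Rightarrow> bipoly set \<Rightarrow> bool" where
  "monomials_quotient_basis M I \<longleftrightarrow>
     (\<forall>u. (\<Sum>(a,c)\<in>M. bmonom (u (a,c)) a c) \<in> I \<longrightarrow> (\<forall>m\<in>M. u m = 0)) \<and>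
     (\<forall>p. \<exists>u. p - (\<Sum>(a,c)\<in>M. bmonom (u (a,c)) a c) \<in> I)"

end

theory Submission
  imports Defs
begin

text \<open>Let \<open>D h = \<alpha> h - 2\<gamma> \<partial>\<^sup>2h/\<partial>\<alpha>\<^sup>2\<close> and let \<open>\<Phi>\<close> be the \<open>\<complex>[\<gamma>]\<close>-linear map with
  \<open>\<Phi>(\<alpha>\<^sup>i) = D\<^sup>i(1)\<close>. Then \<open>\<Phi>(\<alpha> f) = D(\<Phi> f)\<close>, and the recurrence for \<open>\<zeta>'\<close> says exactly that
  \<open>\<Phi>(\<zeta>'\<^sub>k) = \<alpha>\<^sup>k\<close>. Give \<open>\<alpha>\<close> weight 1 and \<open>\<gamma>\<close> weight 2: multiplication by \<open>\<alpha>\<close> raises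
  weights and \<open>\<gamma> \<partial>\<^sup>2/\<partial>\<alpha>\<^sup>2\<close> preserves them, so \<open>\<Phi>\<close> maps \<open>J'\<^sub>g\<close> into the polynomials all of
  whose monomials have weight at least \<open>g\<close>. Since \<open>D\<^sup>i(1) = \<alpha>\<^sup>i + (lower terms)\<close>, \<open>\<Phi>\<close> keeps the
  leading coefficient in \<open>\<alpha>\<close>, so every nonzero \<open>f \<in> J'\<^sub>g\<close> has a leading monomial
  \<open>\<alpha>\<^sup>a \<gamma>\<^sup>c\<close> with \<open>a + 2c \<ge> g\<close>. Conversely the recurrence gives \<open>\<gamma>\<^sup>i \<zeta>'\<^sub>k \<in> J'\<^sub>g\<close> whenever
  \<open>k + 2i \<ge> g\<close>, and \<open>\<gamma>\<^sup>i \<zeta>'\<^sub>k\<close> has leading monomial \<open>\<alpha>\<^sup>k \<gamma>\<^sup>i\<close>. Hence the leading monomials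
  of \<open>J'\<^sub>g\<close> are exactly the monomials of weight at least \<open>g\<close>: the listed elements realise
  the minimal ones, and the monomials of weight below \<open>g\<close> form a basis of the quotient.\<close>

lemma smult_sum_right: "smult a (\<Sum>x\<in>A. f x) = (\<Sum>x\<in>A. smult a (f x))"
  by (induction A rule: infinite_finite_induct) (simp_all add: smult_add_right)

interpretation ring_module: module "(*) :: 'a::comm_ring_1 \<Rightarrow> 'a \<Rightarrow> 'a"
  by unfold_locales (simp_all add: algebra_simps)

text \<open>Here \<open>scale_scale\<close> is \<open>mult.assoc\<close> reversed; as a simp rule it loops against \<open>mult.assoc\<close>.\<close>
declare ring_module.scale_scale [simp del]

lemma gen_ideal_eq_span: "gen_ideal S = ring_module.span S"
  unfolding gen_ideal_def ring_module.span_explicit by blast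

lemma var_alpha_mult: "var_alpha * x = pCons 0 x"
  by (simp add: var_alpha_def)

lemma var_gamma_mult: "var_gamma * x = smult [:0, 1:] x"
  by (simp add: var_gamma_def)

lemma var_gamma_nonzero [simp]: "var_gamma \<noteq> 0"
  by (simp add: var_gamma_def)

lemma var_gamma_power: "var_gamma ^ i = [:monom 1 i:]"
proof (induction i)
  case (Suc i)
  have "[:0, 1:] * monom (1::complex) i = monom 1 (Suc i)"
    by (simp add: monom_Suc)
  then show ?case by (simp only: power_Suc var_gamma_mult Suc.IH) simp
qed (simp add: one_pCons)

text \<open>The paper's recurrence; for \<open>k < 2\<close> the truncated index \<open>k - 2\<close> is harmless because its
  coefficient vanishes.\<close>
lemma zeta'_Suc:
  "zeta' (Suc k) = var_alpha * zeta' k + of_nat (2 * k * (k - 1)) * var_gamma * zeta' (k - 2)"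
  by (cases k rule: zeta'.cases) (simp_all add: algebra_simps)

lemma coeff_zeta'_Suc:
  "coeff (zeta' (Suc m)) (Suc n) = coeff (zeta' m) n + [:0, of_nat (2 * m * (m - 1)):] * coeff (zeta' (m - 2)) (Suc n)"
  unfolding zeta'_Suc by (simp add: var_alpha_mult var_gamma_mult of_nat_poly)

lemma coeff_zeta': "k \<le> n \<Longrightarrow> coeff (zeta' k) n = (if n = k then 1 else 0)"
proof (induction k arbitrary: n rule: less_induct)
  case (less k)
  show ?case
  proof (cases k)
    case (Suc m)
    with less.prems obtain n' where n: "n = Suc n'" and "m \<le> n'"
      by (cases n) auto
    then have "coeff (zeta' m) n' = (if n' = m then 1 else 0)" "coeff (zeta' (m - 2)) n = 0"
      using less.IH Suc by auto
    with Suc n show ?thesis by (simp add: coeff_zeta'_Suc)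
  qed (simp add: coeff_1)
qed

lemma degree_zeta' [simp]: "degree (zeta' k) = k"
proof (rule antisym)
  show "degree (zeta' k) \<le> k"
    by (rule degree_le) (simp add: coeff_zeta')
  show "k \<le> degree (zeta' k)"
    by (rule le_degree) (simp add: coeff_zeta')
qed

lemma lead_coeff_zeta' [simp]: "lead_coeff (zeta' k) = 1"
  by (simp add: coeff_zeta')

lemma zeta'_nonzero [simp]: "zeta' k \<noteq> 0"
  using lead_coeff_zeta'[of k] by (metis leading_coeff_0_iff zero_neq_one)

lemma gamma_power_zeta'_eq_smult: "var_gamma ^ i * zeta' k = smult (monom 1 i) (zeta' k)"
  by (simp add: var_gamma_power)

lemma lead_mon_gamma_power_zeta': "lead_mon (var_gamma ^ i * zeta' k) = (k, i)"
  by (simp add: gamma_power_zeta'_eq_smult lead_mon_def degree_monom_eq coeff_zeta')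

definition raising :: "bipoly \<Rightarrow> bipoly" where
  "raising h = pCons 0 h - smult [:0, 2:] (pderiv (pderiv h))"

lemma raising_0 [simp]: "raising 0 = 0"
  by (simp add: raising_def)

lemma raising_add: "raising (x + y) = raising x + raising y"
  by (simp add: raising_def pderiv_add smult_add_right)

lemma raising_smult: "raising (smult a x) = smult a (raising x)"
  by (simp add: raising_def pderiv_smult smult_diff_right mult.commute)

lemma raising_sum: "raising (\<Sum>x\<in>A. f x) = (\<Sum>x\<in>A. raising (f x))"
  by (induction A rule: infinite_finite_induct) (simp_all add: raising_add)

lemma coeff_raising:
  "coeff (raising h) n = coeff (pCons 0 h) n - [:0, of_nat (2 * (n + 1) * (n + 2)):] * coeff h (n + 2)"
  by (simp add: raising_def coeff_pderiv of_nat_poly algebra_simps)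

lemma raising_monom:
  "raising (monom 1 k) = monom 1 (Suc k) - monom [:0, of_nat (2 * k * (k - 1)):] (k - 2)"
proof -
  have "smult [:0, 2:] (pderiv (pderiv (monom 1 k))) = monom [:0, of_nat (2 * k * (k - 1)):] (k - 2)"
    by (cases k) (simp_all add: pderiv_monom smult_monom of_nat_poly algebra_simps)
  then show ?thesis by (simp add: raising_def monom_Suc)
qed

lemma coeff_raising_power_one:
  "i \<le> n \<Longrightarrow> coeff ((raising ^^ i) 1) n = (if n = i then 1 else 0)"
proof (induction i arbitrary: n)
  case 0
  then show ?case by (simp add: coeff_1)
next
  case (Suc i)
  then obtain m where "n = Suc m" "i \<le> m" by (metis Suc_le_D Suc_le_mono)
  with Suc.IH show ?case by (simp add: coeff_raising)
qed

definition umbral :: "bipoly \<Rightarrow> bipoly" where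
  "umbral f = (\<Sum>i\<le>degree f. smult (coeff f i) ((raising ^^ i) 1))"

lemma umbral_eq_sum:
  assumes "degree f < N"
  shows "umbral f = (\<Sum>i<N. smult (coeff f i) ((raising ^^ i) 1))"
proof -
  have "{..degree f} \<subseteq> {..<N}" using assms by auto
  then show ?thesis unfolding umbral_def
    by (intro sum.mono_neutral_left) (auto simp: coeff_eq_0)
qed

lemma umbral_0 [simp]: "umbral 0 = 0"
  by (simp add: umbral_def)

lemma umbral_add: "umbral (f + h) = umbral f + umbral h"
proof -
  define N where "N = Suc (max (degree f) (degree h))"
  have "degree (f + h) < N" "degree f < N" "degree h < N"
    using degree_add_le_max[of f h] unfolding N_def by linarith+
  then show ?thesis
    by (simp add: umbral_eq_sum[of _ N] sum.distrib smult_add_left del: sum.lessThan_Suc)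
qed

lemma umbral_smult: "umbral (smult a f) = smult a (umbral f)"
proof -
  have "degree (smult a f) < Suc (degree f)"
    using degree_smult_le[of a f] by linarith
  then show ?thesis
    by (simp add: umbral_eq_sum[of _ "Suc (degree f)"] smult_sum_right del: sum.lessThan_Suc)
qed

lemma umbral_pCons_0: "umbral (pCons 0 f) = raising (umbral f)"
proof -
  have "degree (pCons 0 f) < Suc (Suc (degree f))"
    using degree_pCons_le[of 0 f] by linarith
  then have "umbral (pCons 0 f) = (\<Sum>i<Suc (Suc (degree f)). smult (coeff (pCons 0 f) i) ((raising ^^ i) 1))"
    by (rule umbral_eq_sum)
  also have "\<dots> = (\<Sum>i<Suc (degree f). smult (coeff f i) ((raising ^^ Suc i) 1))"
    by (subst sum.lessThan_Suc_shift) simp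
  also have "\<dots> = raising (umbral f)"
    by (simp add: umbral_eq_sum[of f "Suc (degree f)"] raising_sum raising_smult del: sum.lessThan_Suc)
  finally show ?thesis .
qed

lemma umbral_zeta': "umbral (zeta' k) = monom 1 k"
proof (induction k rule: less_induct)
  case (less k)
  show ?case
  proof (cases k)
    case 0
    then show ?thesis by (simp add: umbral_def)
  next
    case (Suc m)
    have "umbral (zeta' k) = raising (umbral (zeta' m))
        + smult [:0, of_nat (2 * m * (m - 1)):] (umbral (zeta' (m - 2)))"
      unfolding Suc zeta'_Suc
      by (simp add: var_alpha_mult var_gamma_mult of_nat_poly umbral_add umbral_pCons_0 umbral_smult)
    also have "\<dots> = monom 1 k"
      using less Suc by (simp add: raising_monom smult_monom)
    finally show ?thesis .
  qed
qed

lemma coeff_umbral_degree: "coeff (umbral f) (degree f) = lead_coeff f"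
proof -
  have "coeff (umbral f) (degree f) = (\<Sum>i\<le>degree f. if i = degree f then coeff f i else 0)"
    unfolding umbral_def coeff_sum coeff_smult
    by (intro sum.cong) (simp_all add: coeff_raising_power_one)
  then show ?thesis by simp
qed

text \<open>Every monomial \<open>\<alpha>\<^sup>i \<gamma>\<^sup>c\<close> of \<open>p\<close> has weight \<open>i + 2c \<ge> g\<close>; the exponent
  \<open>(g - i + 1) div 2\<close> is \<open>\<lceil>(g - i)/2\<rceil>\<close>.\<close>
definition weight_ge :: "nat \<Rightarrow> bipoly \<Rightarrow> bool" where
  "weight_ge g p \<longleftrightarrow> (\<forall>i. [:0, 1:] ^ ((g - i + 1) div 2) dvd coeff p i)"

lemma weight_ge_0 [simp]: "weight_ge g 0"
  by (simp add: weight_ge_def)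

lemma weight_ge_add: "weight_ge g x \<Longrightarrow> weight_ge g y \<Longrightarrow> weight_ge g (x + y)"
  by (simp add: weight_ge_def)

lemma weight_ge_smult: "weight_ge g x \<Longrightarrow> weight_ge g (smult a x)"
  by (simp add: weight_ge_def)

lemma weight_ge_monom: "g \<le> k \<Longrightarrow> weight_ge g (monom 1 k)"
  by (simp add: weight_ge_def coeff_monom)

lemma weight_ge_pCons_0:
  assumes "weight_ge g x"
  shows "weight_ge g (pCons 0 x)"
  unfolding weight_ge_def
proof
  fix i
  show "[:0, 1:] ^ ((g - i + 1) div 2) dvd coeff (pCons 0 x) i"
  proof (cases i)
    case (Suc j)
    have "(g - i + 1) div 2 \<le> (g - j + 1) div 2"
      using Suc by (intro div_le_mono) linarith
    with assms Suc show ?thesis by (auto simp: weight_ge_def intro: power_le_dvd)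
  qed simp
qed

text \<open>The term \<open>2\<gamma> \<partial>\<^sup>2h/\<partial>\<alpha>\<^sup>2\<close> preserves weights, so \<open>raising\<close> can only raise them.\<close>
lemma weight_ge_raising:
  assumes "weight_ge g x"
  shows "weight_ge g (raising x)"
proof -
  have "[:0, 1:] ^ ((g - i + 1) div 2) dvd [:0, of_nat c:] * coeff x (i + 2)" for i c
  proof -
    have "[:0, 1:] ^ ((g - (i + 2) + 1) div 2) dvd coeff x (i + 2)"
      using assms by (simp add: weight_ge_def)
    then have "[:0, 1:] ^ Suc ((g - (i + 2) + 1) div 2) dvd [:0, 1:] * coeff x (i + 2)"
      unfolding power_Suc by (rule mult_dvd_mono[OF dvd_refl])
    also have "\<dots> dvd [:of_nat c:] * ([:0, 1:] * coeff x (i + 2))"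
      by (rule dvd_triv_right)
    also have "\<dots> = [:0, of_nat c:] * coeff x (i + 2)"
      by simp
    finally show ?thesis
      by (rule power_le_dvd) linarith
  qed
  moreover have "weight_ge g (pCons 0 x)"
    using assms by (rule weight_ge_pCons_0)
  ultimately show ?thesis
    unfolding weight_ge_def coeff_raising by (blast intro: dvd_diff)
qed

lemma weight_ge_umbral_mult:
  assumes "weight_ge g (umbral f)"
  shows "weight_ge g (umbral (h * f))"
proof (induction h)
  case (pCons a p)
  have "umbral (pCons a p * f) = smult a (umbral f) + raising (umbral (p * f))"
    by (simp add: umbral_add umbral_smult umbral_pCons_0)
  with pCons assms show ?case
    by (simp add: weight_ge_add weight_ge_smult weight_ge_raising)
qed simp

lemma weight_ge_umbral_lead_mon:
  assumes "weight_ge g (umbral f)" and "f \<noteq> 0"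
  shows "g \<le> fst (lead_mon f) + 2 * snd (lead_mon f)"
proof -
  have "[:0, 1:] ^ ((g - degree f + 1) div 2) dvd lead_coeff f"
    using assms(1) coeff_umbral_degree[of f] unfolding weight_ge_def by metis
  then have "degree ([:0, 1::complex:] ^ ((g - degree f + 1) div 2)) \<le> degree (lead_coeff f)"
    using assms(2) by (intro dvd_imp_degree_le) auto
  then show ?thesis
    by (simp add: lead_mon_def degree_linear_power)
qed

lemma J'_eq_span: "J' g = ring_module.span {zeta' g, zeta' (g + 1), zeta' (g + 2)}"
  unfolding J'_def gen_ideal_eq_span ..

lemma J'_mult: "x \<in> J' g \<Longrightarrow> r * x \<in> J' g"
  unfolding J'_eq_span by (rule ring_module.span_scale)

lemma J'_add: "x \<in> J' g \<Longrightarrow> y \<in> J' g \<Longrightarrow> x + y \<in> J' g"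
  unfolding J'_eq_span by (rule ring_module.span_add)

lemma J'_diff: "x \<in> J' g \<Longrightarrow> y \<in> J' g \<Longrightarrow> x - y \<in> J' g"
  unfolding J'_eq_span by (rule ring_module.span_diff)

lemma weight_ge_umbral_J':
  assumes "f \<in> J' g"
  shows "weight_ge g (umbral f)"
  using assms unfolding J'_eq_span
proof (induction rule: ring_module.span_induct_alt)
  case (step c x y)
  then obtain k where "x = zeta' k" "g \<le> k" by auto
  then have "weight_ge g (umbral (c * x))"
    by (simp add: weight_ge_umbral_mult umbral_zeta' weight_ge_monom)
  with step show ?case by (simp add: umbral_add weight_ge_add)
qed simp

lemma lead_mon_J':
  assumes "f \<in> J' g" and "f \<noteq> 0"
  shows "g \<le> fst (lead_mon f) + 2 * snd (lead_mon f)"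
  using weight_ge_umbral_J'[OF assms(1)] assms(2) by (rule weight_ge_umbral_lead_mon)

lemma zeta'_in_J':
  assumes "g \<le> k"
  shows "zeta' k \<in> J' g"
  using assms
proof (induction k rule: less_induct)
  case (less k)
  show ?case
  proof (cases "k \<le> g + 2")
    case True
    with less.prems have "k = g \<or> k = g + 1 \<or> k = g + 2" by linarith
    then show ?thesis
      unfolding J'_eq_span by (elim disjE) (simp_all add: ring_module.span_base)
  next
    case False
    with less.prems obtain n where k: "k = Suc (n + 2)" and "g \<le> n"
      by (intro that[of "k - 3"]) auto
    with less.IH have "zeta' (n + 2) \<in> J' g" "zeta' n \<in> J' g" by simp_all
    then have "var_alpha * zeta' (n + 2) + (of_nat (2 * (n + 2) * (n + 1)) * var_gamma) * zeta' n \<in> J' g"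
      by (intro J'_add J'_mult)
    moreover have "zeta' k = var_alpha * zeta' (n + 2) + (of_nat (2 * (n + 2) * (n + 1)) * var_gamma) * zeta' n"
      unfolding k zeta'_Suc by simp
    ultimately show ?thesis by simp
  qed
qed

text \<open>Solving the recurrence for its \<open>\<gamma>\<close>-term trades two consecutive \<open>\<zeta>'\<close> for an extra
  factor \<open>\<gamma>\<close>.\<close>
lemma gamma_power_zeta'_in_J'_Suc:
  assumes "var_gamma ^ i * zeta' (Suc (k + 2)) \<in> J' g" and "var_gamma ^ i * zeta' (k + 2) \<in> J' g"
  shows "var_gamma ^ Suc i * zeta' k \<in> J' g"
proof -
  define c :: complex where "c = of_nat (2 * (k + 2) * (k + 1))"
  have "c \<noteq> 0" unfolding c_def by (simp only: of_nat_eq_0_iff) simp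
  have rec: "zeta' (Suc (k + 2)) - var_alpha * zeta' (k + 2) = smult [:c:] (var_gamma * zeta' k)"
    unfolding zeta'_Suc c_def by (simp add: of_nat_poly)
  have "var_gamma ^ i * zeta' (Suc (k + 2)) - var_alpha * (var_gamma ^ i * zeta' (k + 2))
      = var_gamma ^ i * (zeta' (Suc (k + 2)) - var_alpha * zeta' (k + 2))"
    by (metis right_diff_distrib mult.left_commute)
  also have "\<dots> = smult [:c:] (var_gamma ^ Suc i * zeta' k)"
    unfolding rec by (simp only: mult_smult_right power_Suc2 mult.assoc)
  finally have diff: "var_gamma ^ i * zeta' (Suc (k + 2)) - var_alpha * (var_gamma ^ i * zeta' (k + 2))
      = smult [:c:] (var_gamma ^ Suc i * zeta' k)" .
  have "var_gamma ^ Suc i * zeta' k = [:[:inverse c:]:] * smult [:c:] (var_gamma ^ Suc i * zeta' k)"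
    using \<open>c \<noteq> 0\<close> by (simp flip: one_pCons)
  moreover have "var_gamma ^ i * zeta' (Suc (k + 2)) - var_alpha * (var_gamma ^ i * zeta' (k + 2)) \<in> J' g"
    by (rule J'_diff[OF assms(1) J'_mult[OF assms(2)]])
  ultimately show ?thesis by (metis diff J'_mult)
qed

lemma gamma_power_zeta'_in_J':
  assumes "g \<le> k + 2 * i"
  shows "var_gamma ^ i * zeta' k \<in> J' g"
  using assms
proof (induction i arbitrary: k)
  case 0
  then show ?case by (simp add: zeta'_in_J')
next
  case (Suc i)
  show ?case
  proof (cases "g \<le> k + 2 * i")
    case True
    then have "var_gamma * (var_gamma ^ i * zeta' k) \<in> J' g"
      by (intro J'_mult Suc.IH)
    then show ?thesis by (simp only: power_Suc mult.assoc)
  next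
    case False
    with Suc show ?thesis
      by (intro gamma_power_zeta'_in_J'_Suc Suc.IH) simp_all
  qed
qed

lemma groebner_basis_J':
  "is_groebner_basis
     ({var_gamma ^ i * zeta' (g - 2 * i) | i. i \<le> g div 2} \<union> {var_gamma ^ ((g + 1) div 2)}) (J' g)"
  unfolding is_groebner_basis_def
proof (intro conjI ballI impI)
  show "finite ({var_gamma ^ i * zeta' (g - 2 * i) | i. i \<le> g div 2} \<union> {var_gamma ^ ((g + 1) div 2)})"
    by (simp add: finite_image_set)
  have "var_gamma ^ i * zeta' (g - 2 * i) \<in> J' g" for i
    by (rule gamma_power_zeta'_in_J') linarith
  moreover have "var_gamma ^ ((g + 1) div 2) \<in> J' g"
    using gamma_power_zeta'_in_J'[of g 0 "(g + 1) div 2"] by simp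
  ultimately show "{var_gamma ^ i * zeta' (g - 2 * i) | i. i \<le> g div 2} \<union> {var_gamma ^ ((g + 1) div 2)} \<subseteq> J' g"
    by blast
next
  fix f assume "f \<in> J' g" "f \<noteq> 0"
  then have weight: "g \<le> fst (lead_mon f) + 2 * snd (lead_mon f)"
    by (rule lead_mon_J')
  show "\<exists>h\<in>{var_gamma ^ i * zeta' (g - 2 * i) | i. i \<le> g div 2} \<union> {var_gamma ^ ((g + 1) div 2)}.
          h \<noteq> 0 \<and> mon_dvd (lead_mon h) (lead_mon f)"
  proof (cases "snd (lead_mon f) \<le> g div 2")
    case True
    let ?h = "var_gamma ^ snd (lead_mon f) * zeta' (g - 2 * snd (lead_mon f))"
    have "?h \<in> {var_gamma ^ i * zeta' (g - 2 * i) | i. i \<le> g div 2}"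
      using True by blast
    moreover have "mon_dvd (lead_mon ?h) (lead_mon f)"
      using weight by (simp add: lead_mon_gamma_power_zeta' mon_dvd_def)
    moreover have "?h \<noteq> 0" by simp
    ultimately show ?thesis by blast
  next
    case False
    have "lead_mon (var_gamma ^ ((g + 1) div 2)) = (0, (g + 1) div 2)"
      using lead_mon_gamma_power_zeta'[of _ 0] by simp
    with False have "mon_dvd (lead_mon (var_gamma ^ ((g + 1) div 2))) (lead_mon f)"
      by (simp add: mon_dvd_def)
    moreover have "var_gamma ^ ((g + 1) div 2) \<noteq> 0" by simp
    ultimately show ?thesis by blast
  qed
qed

definition monomial_comb :: "(nat \<times> nat) set \<Rightarrow> (nat \<times> nat \<Rightarrow> complex) \<Rightarrow> bipoly" where
  "monomial_comb M u = (\<Sum>(a, c)\<in>M. bmonom (u (a, c)) a c)"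

lemma coeff_monomial_comb:
  assumes "finite M"
  shows "coeff (coeff (monomial_comb M u) a) c = (if (a, c) \<in> M then u (a, c) else 0)"
proof -
  have "coeff (coeff (monomial_comb M u) a) c = (\<Sum>m\<in>M. if m = (a, c) then u m else 0)"
    unfolding monomial_comb_def bmonom_def coeff_sum
    by (intro sum.cong) (auto simp: coeff_monom split: if_splits)
  then show ?thesis
    using assms by (simp add: sum.delta')
qed

lemma coeff_lead_mon_nonzero: "f \<noteq> 0 \<Longrightarrow> coeff (coeff f (fst (lead_mon f))) (snd (lead_mon f)) \<noteq> 0"
  by (simp add: lead_mon_def)

lemma monomial_comb_independent:
  assumes "finite M" and "\<forall>f\<in>I. f \<noteq> 0 \<longrightarrow> lead_mon f \<notin> M" and "monomial_comb M u \<in> I"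
  shows "\<forall>m\<in>M. u m = 0"
proof (rule ccontr)
  assume "\<not> (\<forall>m\<in>M. u m = 0)"
  then obtain a c where "(a, c) \<in> M" "u (a, c) \<noteq> 0" by auto
  then have nonzero: "monomial_comb M u \<noteq> 0"
    using coeff_monomial_comb[OF assms(1), of u a c] by auto
  then have "lead_mon (monomial_comb M u) \<in> M"
    using coeff_lead_mon_nonzero coeff_monomial_comb[OF assms(1)] by (metis prod.collapse)
  with assms(2,3) nonzero show False by blast
qed

definition congruent_to_comb :: "(nat \<times> nat) set \<Rightarrow> bipoly set \<Rightarrow> bipoly \<Rightarrow> bool" where
  "congruent_to_comb M S p \<longleftrightarrow> (\<exists>u. p - monomial_comb M u \<in> ring_module.span S)"

lemma congruent_to_comb_span: "p \<in> ring_module.span S \<Longrightarrow> congruent_to_comb M S p"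
  unfolding congruent_to_comb_def by (intro exI[of _ "\<lambda>_. 0"]) (simp add: monomial_comb_def bmonom_def)

lemma congruent_to_comb_add:
  assumes "congruent_to_comb M S p" and "congruent_to_comb M S q"
  shows "congruent_to_comb M S (p + q)"
proof -
  obtain u v where "p - monomial_comb M u \<in> ring_module.span S" "q - monomial_comb M v \<in> ring_module.span S"
    using assms unfolding congruent_to_comb_def by blast
  then have "(p + q) - monomial_comb M (\<lambda>m. u m + v m) \<in> ring_module.span S"
    using ring_module.span_add
    by (fastforce simp: monomial_comb_def bmonom_def sum.distrib split_beta add_monom[symmetric] algebra_simps)
  then show ?thesis unfolding congruent_to_comb_def by blast
qed

lemma congruent_to_comb_smult:
  assumes "congruent_to_comb M S p"
  shows "congruent_to_comb M S (smult [:k:] p)"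
proof -
  obtain u where "p - monomial_comb M u \<in> ring_module.span S"
    using assms unfolding congruent_to_comb_def by blast
  then have "[:[:k:]:] * (p - monomial_comb M u) \<in> ring_module.span S"
    by (rule ring_module.span_scale)
  moreover have "[:[:k:]:] * (p - monomial_comb M u) = smult [:k:] p - monomial_comb M (\<lambda>m. k * u m)"
    by (simp add: monomial_comb_def bmonom_def smult_diff_right smult_sum_right split_beta smult_monom)
  ultimately show ?thesis unfolding congruent_to_comb_def by auto
qed

lemma congruent_to_comb_sum:
  "(\<And>x. x \<in> A \<Longrightarrow> congruent_to_comb M S (f x)) \<Longrightarrow> congruent_to_comb M S (\<Sum>x\<in>A. f x)"
  by (induction A rule: infinite_finite_induct)
    (auto intro: congruent_to_comb_add congruent_to_comb_span ring_module.span_zero)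

lemma congruent_to_comb_bmonom:
  assumes "finite M" and "(a, c) \<in> M"
  shows "congruent_to_comb M S (bmonom 1 a c)"
proof -
  have "monomial_comb M (\<lambda>m. if m = (a, c) then 1 else 0) = (\<Sum>m\<in>M. if m = (a, c) then bmonom 1 a c else 0)"
    unfolding monomial_comb_def by (intro sum.cong) (auto simp: bmonom_def split: if_splits)
  also have "\<dots> = bmonom 1 a c"
    using assms by simp
  finally show ?thesis
    unfolding congruent_to_comb_def by (metis diff_self ring_module.span_zero)
qed

lemma monom_as_sum_bmonom: "monom h a = (\<Sum>c\<le>degree h. smult [:coeff h c:] (bmonom 1 a c))"
proof -
  have "monom h a = monom (\<Sum>c\<le>degree h. monom (coeff h c) c) a"
    by (simp add: poly_as_sum_of_monoms)
  also have "\<dots> = (\<Sum>c\<le>degree h. smult [:coeff h c:] (bmonom 1 a c))"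
    unfolding monom_sum bmonom_def by (intro sum.cong) (auto simp: smult_monom)
  finally show ?thesis .
qed

lemma congruent_to_comb_vanishing_above:
  assumes "finite M"
    and reduce: "\<And>a c. (a, c) \<notin> M \<Longrightarrow> \<exists>q\<in>ring_module.span S. \<forall>i\<ge>a. coeff (bmonom 1 a c - q) i = 0"
    and "\<forall>i\<ge>n. coeff p i = 0"
  shows "congruent_to_comb M S p"
  using assms(3)
proof (induction n arbitrary: p)
  case 0
  then have "p = 0" by (metis coeff_0 le0 poly_eqI)
  then show ?case by (simp add: congruent_to_comb_span ring_module.span_zero)
next
  case (Suc n)
  have bmonom: "congruent_to_comb M S (bmonom 1 n c)" for c
  proof (cases "(n, c) \<in> M")
    case True
    with assms(1) show ?thesis by (rule congruent_to_comb_bmonom)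
  next
    case False
    then obtain q where q: "q \<in> ring_module.span S" "\<forall>i\<ge>n. coeff (bmonom 1 n c - q) i = 0"
      using reduce by blast
    have "congruent_to_comb M S ((bmonom 1 n c - q) + q)"
      using q by (intro congruent_to_comb_add congruent_to_comb_span Suc.IH)
    then show ?thesis by simp
  qed
  have "congruent_to_comb M S (monom (coeff p n) n)"
    unfolding monom_as_sum_bmonom
    by (intro congruent_to_comb_sum congruent_to_comb_smult bmonom)
  moreover have "congruent_to_comb M S (p - monom (coeff p n) n)"
    using Suc.prems by (intro Suc.IH) (simp add: le_Suc_eq coeff_monom)
  ultimately have "congruent_to_comb M S ((p - monom (coeff p n) n) + monom (coeff p n) n)"
    by (rule congruent_to_comb_add[rotated])
  then show ?case by simp
qed

lemma congruent_to_comb_all: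
  assumes "finite M"
    and "\<And>a c. (a, c) \<notin> M \<Longrightarrow> \<exists>q\<in>ring_module.span S. \<forall>i\<ge>a. coeff (bmonom 1 a c - q) i = 0"
  shows "congruent_to_comb M S p"
  using assms by (rule congruent_to_comb_vanishing_above[where n = "Suc (degree p)"]) (simp_all add: coeff_eq_0 Suc_le_eq)

lemma monomial_reduction_J':
  assumes "g \<le> a + 2 * c"
  shows "\<exists>q\<in>J' g. \<forall>i\<ge>a. coeff (bmonom 1 a c - q) i = 0"
proof
  define k where "k = g - 2 * c"
  have "k \<le> a" using assms by (simp add: k_def)
  show "monom 1 (a - k) * (var_gamma ^ c * zeta' k) \<in> J' g"
    by (intro J'_mult gamma_power_zeta'_in_J') (simp add: k_def)
  show "\<forall>i\<ge>a. coeff (bmonom 1 a c - monom 1 (a - k) * (var_gamma ^ c * zeta' k)) i = 0"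
    using \<open>k \<le> a\<close>
    by (auto simp: bmonom_def coeff_monom_mult gamma_power_zeta'_eq_smult coeff_zeta')
qed

lemma monomials_quotient_basis_J':
  "monomials_quotient_basis {(a, c). a + 2 * c < g} (J' g)"
proof -
  let ?M = "{(a, c). a + 2 * c < g}"
  have "finite ?M"
    by (rule finite_subset[of _ "{..<g} \<times> {..<g}"]) auto
  have "\<forall>m\<in>?M. u m = 0" if "monomial_comb ?M u \<in> J' g" for u
    using \<open>finite ?M\<close> _ that by (rule monomial_comb_independent) (auto dest: lead_mon_J')
  moreover have "congruent_to_comb ?M {zeta' g, zeta' (g + 1), zeta' (g + 2)} p" for p
    using \<open>finite ?M\<close> monomial_reduction_J' unfolding J'_eq_span
    by (rule congruent_to_comb_all) auto
  ultimately show ?thesis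
    unfolding monomials_quotient_basis_def monomial_comb_def[symmetric]
    by (simp add: congruent_to_comb_def J'_eq_span)
qed

theorem proposition5p15:
  fixes g :: nat
  shows "is_groebner_basis
           ({var_gamma ^ i * zeta' (g - 2 * i) | i. i \<le> g div 2} \<union> {var_gamma ^ ((g + 1) div 2)})
           (J' g)
       \<and> monomials_quotient_basis
           (if even g then {(a, c). 2 * c < g \<and> a < g - 2 * c}
            else {(a, c). 2 * c \<le> g - 1 \<and> a < g - 2 * c})
           (J' g)"
proof -
  have "(if even g then {(a, c). 2 * c < g \<and> a < g - 2 * c}
         else {(a, c). 2 * c \<le> g - 1 \<and> a < g - 2 * c}) = {(a, c). a + 2 * c < g}"
    by (auto elim: oddE)
  with groebner_basis_J' monomials_quotient_basis_J' show ?thesis by simp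
qed

end
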